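(* Let $f:\mathbb{R}_{\ge0}\to\mathbb{R}_{\ge0}$ be strictly increasing, let $\alpha\in[0,1)$, and let $$X(f,\alpha)=\{f(n)e^{2\pi i n\alpha}\ :\ n\in\mathbb{N}\}\subset\mathbb{C}.$$ If $X(f,\alpha)$ is $r$-relatively dense, then $\limsup_{n\to\infty} f(n)/\sqrt{n}<2r$. If $X(f,\alpha)$ is $s$-uniformly discrete, then $\liminf_{n\to\infty} f(n)/\sqrt{n}>s/2$.
   Context: $\mathbb{C}$ is identified with $\mathbb{R}^2$, and $B(x,r)$ denotes the open disk of radius $r$ centered at $x$. A set $X\subset\mathbb{C}$ is $r$-relatively dense ($r>0$) if $B(x,r)\cap X\ne\emptyset$ for every $x\in\mathbb{C}$. It is $s$-uniformly discrete ($s>0$) if $\mathrm{Card}(B(x,s)\cap X)\le1$ for every $x\in\mathbb{C}$. *)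

theory Defs
  imports "HOL-Analysis.Analysis"
begin

definition rel_dense :: "real \<Rightarrow> complex set \<Rightarrow> bool" where
  "rel_dense r X \<longleftrightarrow> r > 0 \<and> (\<forall>x. ball x r \<inter> X \<noteq> {})"

definition unif_discrete :: "real \<Rightarrow> complex set \<Rightarrow> bool" where
  "unif_discrete s X \<longleftrightarrow> s > 0 \<and> (\<forall>x. finite (ball x s \<inter> X) \<and> card (ball x s \<inter> X) \<le> 1)"

definition spiral_set :: "(real \<Rightarrow> real) \<Rightarrow> real \<Rightarrow> complex set" where
  "spiral_set f \<alpha> = {complex_of_real (f (real n)) * exp (2 * of_real pi * \<i> * of_nat n * of_real \<alpha>) | n :: nat. True}"

end

theory Submission
  imports Defs "HOL-Real_Asymp.Real_Asymp"
begin

(* Write x n = f n e^(2 pi i n alpha). Only the moduli |x n| = f n matter,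
   and since they increase, x 0, ..., x m all lie in the closed disc of radius f m.

   Relatively dense: each point of the grid 2r(Z + iZ) in the square of half-side 2rk has some x n
   within distance r, and distinct grid points get distinct indices n.  So (2k + 1)^2 indices have
   |x n| < 3rk + r, whence f m <= 3/2 r sqrt m + 4r and the limsup is at most 3r/2 < 2r.

   Uniformly discrete: the discs of radius rho = s/2 about x 0, ..., x m are disjoint and lie in the
   disc of radius f m + rho, which only gives liminf >= rho.  For the strict inequality every point x
   also gets a disc of radius rho/400 centred at x + 401/400 rho u, with u one of the two unit
   directions 1 and (4 + 3i)/5: were both directions blocked by other points, these would lie in
   thin lenses near x + 2 rho and x + 2 rho u, hence closer together than 2 rho.  The extra discs are
   disjoint from all others, so each point occupies area pi (rho^2 + (rho/400)^2). *)

definition separated :: "real \<Rightarrow> 'a::metric_space set \<Rightarrow> bool" where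
  "separated \<epsilon> S \<longleftrightarrow> (\<forall>a\<in>S. \<forall>b\<in>S. a \<noteq> b \<longrightarrow> \<epsilon> \<le> dist a b)"

lemma unif_discrete_imp_separated:
  assumes "unif_discrete s X"
  shows "separated s X"
  unfolding separated_def
proof (intro ballI impI)
  fix a b assume "a \<in> X" "b \<in> X" "a \<noteq> b"
  show "s \<le> dist a b"
  proof (rule ccontr)
    assume "\<not> s \<le> dist a b"
    then have "{a, b} \<subseteq> ball a s \<inter> X"
      using assms \<open>a \<in> X\<close> \<open>b \<in> X\<close> by (auto simp: unif_discrete_def)
    then have "card {a, b} \<le> card (ball a s \<inter> X)"
      using assms by (intro card_mono) (auto simp: unif_discrete_def)
    moreover have "card (ball a s \<inter> X) \<le> 1"
      using assms by (simp add: unif_discrete_def)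
    ultimately show False
      using \<open>a \<noteq> b\<close> by simp
  qed
qed

lemma norm_Complex_of_int_ge_1:
  assumes "(a, b) \<noteq> (0, 0)"
  shows "1 \<le> cmod (Complex (of_int a) (of_int b))"
proof -
  have "1 \<le> \<bar>a\<bar> \<or> 1 \<le> \<bar>b\<bar>"
    using assms by auto
  then have "1 \<le> \<bar>of_int a :: real\<bar> \<or> 1 \<le> \<bar>of_int b :: real\<bar>"
    by (metis of_int_1_le_iff of_int_abs)
  then show ?thesis
    using abs_Re_le_cmod[of "Complex (of_int a) (of_int b)"]
      abs_Im_le_cmod[of "Complex (of_int a) (of_int b)"] by auto
qed

lemma separated_grid_in_cball:
  assumes "r > 0"
  obtains S :: "complex set"
  where "finite S" "card S = (2*k+1)^2" "separated (2*r) S" "S \<subseteq> cball 0 (3*r*k)"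
proof
  define Z where "Z = {-int k..int k}"
  define p where "p = (\<lambda>(a, b). of_real (2*r) * Complex (of_int a) (of_int b))"
  have "inj_on p (Z \<times> Z)"
    using assms by (auto intro!: inj_onI simp: p_def complex_eq_iff)
  then show "card (p ` (Z \<times> Z)) = (2*k+1)^2"
    by (simp add: card_image card_cartesian_product Z_def power2_eq_square nat_add_distrib nat_mult_distrib)
  show "finite (p ` (Z \<times> Z))"
    by (simp add: Z_def)
  show "separated (2*r) (p ` (Z \<times> Z))"
    unfolding separated_def
  proof clarsimp
    fix a b a' b' :: int
    assume "p (a, b) \<noteq> p (a', b')"
    then have "(a - a', b - b') \<noteq> (0, 0)"
      by auto
    then have "2*r * 1 \<le> 2*r * cmod (Complex (of_int (a - a')) (of_int (b - b')))"
      using assms by (intro mult_left_mono norm_Complex_of_int_ge_1) auto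
    also have "\<dots> = dist (p (a, b)) (p (a', b'))"
      using assms by (simp add: p_def dist_norm norm_mult flip: right_diff_distrib complex_diff)
    finally show "2*r \<le> dist (p (a, b)) (p (a', b'))"
      by simp
  qed
  show "p ` (Z \<times> Z) \<subseteq> cball 0 (3*r*k)"
  proof clarsimp
    fix a b assume "a \<in> Z" "b \<in> Z"
    then have "(of_int a)^2 \<le> (real k)^2" "(of_int b)^2 \<le> (real k)^2"
      by (auto simp: Z_def abs_le_square_iff[symmetric])
    then have "cmod (Complex (of_int a) (of_int b))^2 \<le> 2 * (real k)^2"
      by (simp add: cmod_power2)
    also have "\<dots> \<le> (3/2 * real k)^2"
      by (simp add: power2_eq_square)
    finally have "cmod (Complex (of_int a) (of_int b))^2 \<le> (3/2 * real k)^2" .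
    then have "cmod (Complex (of_int a) (of_int b)) \<le> 3/2 * real k"
      by (rule power2_le_imp_le) simp
    then show "cmod (p (a, b)) \<le> 3*r*k"
      using assms by (simp add: p_def norm_mult)
  qed
qed

lemma indices_near_separated_points:
  fixes x :: "'i \<Rightarrow> 'a::metric_space"
  assumes "finite S" "separated (2*r) S" "\<And>y. y \<in> S \<Longrightarrow> \<exists>i. dist y (x i) < r"
  obtains A where "finite A" "card A = card S" "\<And>i. i \<in> A \<Longrightarrow> \<exists>y\<in>S. dist y (x i) < r"
proof -
  obtain g where g: "\<And>y. y \<in> S \<Longrightarrow> dist y (x (g y)) < r"
    using assms(3) by metis
  have "inj_on g S"
  proof (rule inj_onI, rule ccontr)
    fix y y' assume "y \<in> S" "y' \<in> S" "g y = g y'" "y \<noteq> y'"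
    moreover have "dist y (x (g y)) < r" "dist y' (x (g y)) < r"
      using g[OF \<open>y \<in> S\<close>] g[OF \<open>y' \<in> S\<close>] \<open>g y = g y'\<close> by simp_all
    ultimately have "dist y y' < 2*r"
      using dist_triangle2[of y y' "x (g y)"] by linarith
    with \<open>y \<in> S\<close> \<open>y' \<in> S\<close> \<open>y \<noteq> y'\<close> show False
      using assms(2) unfolding separated_def by (meson not_le)
  qed
  show ?thesis
  proof (rule that)
    show "finite (g ` S)"
      using assms(1) by simp
    show "card (g ` S) = card S"
      using \<open>inj_on g S\<close> by (rule card_image)
  qed (use g in blast)
qed

lemma rel_dense_seq_norm_le:
  fixes x :: "nat \<Rightarrow> complex"
  assumes "r > 0" "\<And>y. \<exists>n. dist y (x n) < r" "mono (\<lambda>n. norm (x n))"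
  shows "norm (x m) \<le> 3/2 * r * sqrt (real m) + 4*r"
proof -
  define k where "k = nat \<lceil>sqrt (real m) / 2\<rceil>"
  have k_eq: "real k = of_int \<lceil>sqrt (real m) / 2\<rceil>"
    by (simp add: k_def)
  have k: "sqrt (real m) / 2 \<le> real k" "real k \<le> sqrt (real m) / 2 + 1"
    unfolding k_eq by (rule le_of_int_ceiling of_int_ceiling_le_add_one)+
  obtain S :: "complex set" where S: "finite S" "card S = (2*k+1)^2" "separated (2*r) S" "S \<subseteq> cball 0 (3*r*k)"
    using separated_grid_in_cball[OF assms(1)] by blast
  have cover: "\<And>y. y \<in> S \<Longrightarrow> \<exists>n. dist y (x n) < r"
    using assms(2) by blast
  obtain A where A: "finite A" "card A = card S" "\<And>i. i \<in> A \<Longrightarrow> \<exists>y\<in>S. dist y (x i) < r"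
    using indices_near_separated_points[OF S(1,3) cover] by blast
  have "real m = sqrt (real m)^2"
    by simp
  also have "\<dots> < (2 * real k + 1)^2"
    using k by (intro power_strict_mono) auto
  also have "\<dots> = real (card A)"
    using A(2) S(2) by simp
  finally have "m < card A"
    by (simp only: of_nat_less_iff)
  then have "\<not> A \<subseteq> {..<m}"
    using card_mono[of "{..<m}" A] by auto
  then obtain i where "i \<in> A" "m \<le> i"
    using not_less by blast
  then obtain y where "y \<in> S" "dist y (x i) < r"
    using A(3) by blast
  have "norm (x m) \<le> norm (x i)"
    using monoD[OF assms(3) \<open>m \<le> i\<close>] by simp
  also have "\<dots> \<le> norm y + dist y (x i)"
    by (metis dist_0_norm dist_triangle)
  also have "\<dots> \<le> 3*r*k + r"
    using \<open>y \<in> S\<close> S(4) \<open>dist y (x i) < r\<close> by fastforce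
  also have "\<dots> \<le> 3*r*(sqrt (real m) / 2 + 1) + r"
    using k(2) assms(1) by (intro add_right_mono mult_left_mono) auto
  also have "\<dots> = 3/2 * r * sqrt (real m) + 4*r"
    by (simp add: algebra_simps)
  finally show ?thesis .
qed

(* The constants are tuned so that the worst case norm v = 2 rho gives exactly (rho/5)^2 below. *)
lemma lens_near_tip:
  fixes u v :: "'a::real_inner"
  assumes "\<rho> > 0" "norm u = 1" "2*\<rho> \<le> norm v" "dist v ((401/400*\<rho>) *\<^sub>R u) < 403/400*\<rho>"
  shows "dist v ((2*\<rho>) *\<^sub>R u) < \<rho>/5"
proof -
  have sq: "dist v (c *\<^sub>R u)^2 = norm v^2 - 2*c*(v \<bullet> u) + c^2" for c
    using assms(2) unfolding dist_norm power2_norm_eq_inner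
    by (simp add: norm_eq_1 algebra_simps inner_commute power2_eq_square)
  have "dist v ((401/400*\<rho>) *\<^sub>R u)^2 < (403/400*\<rho>)^2"
    using assms(1,4) by (intro power_strict_mono) auto
  then have near: "norm v^2 - 401/200*(\<rho>*(v \<bullet> u)) + 160801/160000*\<rho>^2 < 162409/160000*\<rho>^2"
    unfolding sq by (simp add: power_mult_distrib power_divide algebra_simps)
  have "(2*\<rho>)^2 \<le> norm v^2"
    using assms(1,3) by (intro power_mono) auto
  with near have "norm v^2 - 4*(\<rho>*(v \<bullet> u)) + 4*\<rho>^2 < 1/25*\<rho>^2"
    by (simp add: power_mult_distrib)
  then have "dist v ((2*\<rho>) *\<^sub>R u)^2 < (\<rho>/5)^2"
    unfolding sq by (simp add: power_mult_distrib power_divide algebra_simps)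
  then show ?thesis
    by (rule power2_less_imp_less) (use assms(1) in simp)
qed

lemma lens_points_close:
  fixes u1 u2 v1 v2 :: "'a::real_inner"
  assumes "\<rho> > 0" "norm u1 = 1" "norm u2 = 1" "1/5 < norm (u1 - u2)" "norm (u1 - u2) < 4/5"
    and "2*\<rho> \<le> norm v1" "dist v1 ((401/400*\<rho>) *\<^sub>R u1) < 403/400*\<rho>"
    and "2*\<rho> \<le> norm v2" "dist v2 ((401/400*\<rho>) *\<^sub>R u2) < 403/400*\<rho>"
  shows "0 < dist v1 v2" "dist v1 v2 < 2*\<rho>"
proof -
  have tip1: "dist v1 ((2*\<rho>) *\<^sub>R u1) < \<rho>/5" and tip2: "dist v2 ((2*\<rho>) *\<^sub>R u2) < \<rho>/5"
    using lens_near_tip assms by blast+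
  have tips: "dist ((2*\<rho>) *\<^sub>R u1) ((2*\<rho>) *\<^sub>R u2) = 2*\<rho> * norm (u1 - u2)"
    using assms(1) by (simp add: dist_norm flip: scaleR_diff_right)
  have "2*\<rho> * (1/5) < 2*\<rho> * norm (u1 - u2)" "2*\<rho> * norm (u1 - u2) < 2*\<rho> * (4/5)"
    using assms(1,4,5) by simp_all
  moreover have "dist ((2*\<rho>) *\<^sub>R u1) ((2*\<rho>) *\<^sub>R u2)
      \<le> dist v1 ((2*\<rho>) *\<^sub>R u1) + dist v1 v2 + dist v2 ((2*\<rho>) *\<^sub>R u2)"
    using dist_triangle3[of "(2*\<rho>) *\<^sub>R u1" "(2*\<rho>) *\<^sub>R u2" v1]
      dist_triangle[of v1 "(2*\<rho>) *\<^sub>R u2" v2] by linarith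
  moreover have "dist v1 v2
      \<le> dist v1 ((2*\<rho>) *\<^sub>R u1) + dist ((2*\<rho>) *\<^sub>R u1) ((2*\<rho>) *\<^sub>R u2) + dist v2 ((2*\<rho>) *\<^sub>R u2)"
    using dist_triangle[of v1 v2 "(2*\<rho>) *\<^sub>R u1"]
      dist_triangle[of "(2*\<rho>) *\<^sub>R u1" v2 "(2*\<rho>) *\<^sub>R u2"]
      dist_commute[of v2 "(2*\<rho>) *\<^sub>R u2"] by linarith
  ultimately show "0 < dist v1 v2" "dist v1 v2 < 2*\<rho>"
    using tip1 tip2 tips by linarith+
qed

lemma separated_free_direction:
  fixes u1 u2 :: "'a::real_inner"
  assumes "\<rho> > 0" "norm u1 = 1" "norm u2 = 1" "1/5 < norm (u1 - u2)" "norm (u1 - u2) < 4/5"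
    and "separated (2*\<rho>) S" "a \<in> S"
  obtains u where "u \<in> {u1, u2}" "\<And>b. b \<in> S - {a} \<Longrightarrow> 403/400*\<rho> \<le> dist b (a + (401/400*\<rho>) *\<^sub>R u)"
proof -
  have shift: "dist b (a + v) = dist (b - a) v" for b v
    by (simp add: dist_norm diff_diff_eq)
  have "\<exists>u\<in>{u1, u2}. \<forall>b\<in>S - {a}. 403/400*\<rho> \<le> dist b (a + (401/400*\<rho>) *\<^sub>R u)"
  proof (rule ccontr)
    assume "\<not> ?thesis"
    then obtain b1 b2 where b: "b1 \<in> S - {a}" "b2 \<in> S - {a}"
      "dist (b1 - a) ((401/400*\<rho>) *\<^sub>R u1) < 403/400*\<rho>"
      "dist (b2 - a) ((401/400*\<rho>) *\<^sub>R u2) < 403/400*\<rho>"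
      unfolding shift by (auto simp: not_le)
    have far: "2*\<rho> \<le> norm (b1 - a)" "2*\<rho> \<le> norm (b2 - a)"
      using assms(6,7) b(1,2) unfolding separated_def by (auto simp: dist_norm)
    have "0 < dist (b1 - a) (b2 - a)" "dist (b1 - a) (b2 - a) < 2*\<rho>"
      using lens_points_close[OF assms(1-5) far(1) b(3) far(2) b(4)] by auto
    then have "b1 \<noteq> b2" "dist b1 b2 < 2*\<rho>"
      by (auto simp: dist_norm)
    then show False
      using assms(6) b(1,2) unfolding separated_def by (meson DiffD1 not_le)
  qed
  then show ?thesis
    using that by blast
qed

lemma disjoint_ball_pairs:
  fixes a b p q :: "'a::metric_space"
  assumes "2*\<rho> \<le> dist a b" "\<rho> + 3*\<delta> \<le> dist a q" "\<rho> + 3*\<delta> \<le> dist b p" "dist b q \<le> \<rho> + \<delta>"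
  shows "(ball a \<rho> \<union> ball p \<delta>) \<inter> (ball b \<rho> \<union> ball q \<delta>) = {}"
proof -
  have "False" if "z \<in> ball a \<rho> \<union> ball p \<delta>" "z \<in> ball b \<rho> \<union> ball q \<delta>" for z
    using that unfolding Un_iff mem_ball
    using dist_triangle2[of a b z] dist_triangle2[of a q z] dist_triangle2[of b p z]
      dist_triangle2[of p q z] dist_triangle[of b p q] dist_commute[of q p]
      zero_le_dist[of p z] zero_le_dist[of q z] assms
    by (elim disjE) linarith+
  then show ?thesis
    by blast
qed

lemma measure_ball_Un_ball:
  fixes a p :: "'a::euclidean_space"
  assumes "0 \<le> \<rho>" "0 \<le> \<delta>" "\<rho> + \<delta> \<le> dist a p"
  shows "measure lborel (ball a \<rho> \<union> ball p \<delta>) = (\<rho> ^ DIM('a) + \<delta> ^ DIM('a)) * measure lborel (ball (0::'a) 1)"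
proof -
  have "False" if "z \<in> ball a \<rho>" "z \<in> ball p \<delta>" for z
    using that dist_triangle2[of a p z] assms(3) by simp
  then have "ball a \<rho> \<inter> ball p \<delta> = {}"
    by blast
  then have "measure lborel (ball a \<rho> \<union> ball p \<delta>) = measure lborel (ball a \<rho>) + measure lborel (ball p \<delta>)"
    by (intro measure_Union) (simp_all add: less_top emeasure_lborel_ball_finite[unfolded infinity_ennreal_def])
  then show ?thesis
    using content_ball_conv_unit_ball[OF assms(1), of a] content_ball_conv_unit_ball[OF assms(2), of p]
    by (simp add: algebra_simps)
qed

lemma card_mult_le_measure_if_disjoint:
  assumes "finite I" "disjoint_family_on E I" "\<And>i. i \<in> I \<Longrightarrow> E i \<in> sets M"
    "\<And>i. i \<in> I \<Longrightarrow> E i \<subseteq> B" "B \<in> fmeasurable M" "\<And>i. i \<in> I \<Longrightarrow> c \<le> measure M (E i)"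
  shows "real (card I) * c \<le> measure M B"
proof -
  have fin: "E i \<in> fmeasurable M" if "i \<in> I" for i
    using assms(3-5) that by (blast intro: fmeasurableI2)
  have "real (card I) * c \<le> (\<Sum>i\<in>I. measure M (E i))"
    using sum_mono[of I "\<lambda>_. c", OF assms(6)] by simp
  also have "\<dots> = measure M (\<Union>i\<in>I. E i)"
    using fin assms(1,2,3) by (intro measure_finite_Union[symmetric]) (auto simp: fmeasurable_def less_top)
  also have "\<dots> \<le> measure M B"
    using assms(1,3-5) by (intro measure_mono_fmeasurable) (auto intro: sets.finite_UN)
  finally show ?thesis .
qed

lemma separated_companions:
  fixes S :: "complex set"
  assumes "\<rho> > 0" "separated (2*\<rho>) S"
  obtains c where "\<And>a. a \<in> S \<Longrightarrow> dist a (c a) = 401/400*\<rho>"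
    "\<And>a b. a \<in> S \<Longrightarrow> b \<in> S - {a} \<Longrightarrow> 403/400*\<rho> \<le> dist b (c a)"
proof -
  define w where "w = Complex (4/5) (3/5)"
  have "norm (1 - w) = sqrt (2/5)"
    unfolding w_def cmod_def by (simp add: power2_eq_square)
  moreover have "1/5 < sqrt (2/5)"
    by (rule real_less_rsqrt) (simp add: power2_eq_square)
  moreover have "sqrt (2/5) < 4/5"
    by (rule real_less_lsqrt) (simp_all add: power2_eq_square)
  moreover have "norm w = 1"
    unfolding w_def cmod_def by (simp add: power2_eq_square)
  ultimately have w: "norm w = 1" "1/5 < norm (1 - w)" "norm (1 - w) < 4/5"
    by simp_all
  have "\<forall>a\<in>S. \<exists>u. u \<in> {1, w} \<and> (\<forall>b\<in>S - {a}. 403/400*\<rho> \<le> dist b (a + (401/400*\<rho>) *\<^sub>R u))"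
    using separated_free_direction[OF assms(1) norm_one w assms(2)] by metis
  then obtain u where u: "\<And>a. a \<in> S \<Longrightarrow> u a \<in> {1, w}"
    "\<And>a b. a \<in> S \<Longrightarrow> b \<in> S - {a} \<Longrightarrow> 403/400*\<rho> \<le> dist b (a + (401/400*\<rho>) *\<^sub>R u a)"
    by metis
  show ?thesis
  proof (rule that)
    show "dist a (a + (401/400*\<rho>) *\<^sub>R u a) = 401/400*\<rho>" if "a \<in> S" for a
      using u(1)[OF that] w(1) assms(1) by (auto simp: dist_norm)
  qed (use u(2) in blast)
qed

lemma separated_card_le:
  fixes S :: "complex set"
  assumes "\<rho> > 0" "finite S" "separated (2*\<rho>) S" "S \<subseteq> cball 0 R"
  shows "real (card S) * (\<rho>^2 + (\<rho>/400)^2) \<le> (R + \<rho> + \<rho>/200)^2"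
proof (cases "S = {}")
  case False
  then have R: "0 \<le> R"
    using assms(4) norm_ge_zero order_trans by fastforce
  define \<delta> where "\<delta> = \<rho>/400"
  obtain c where dist_c: "\<And>a. a \<in> S \<Longrightarrow> dist a (c a) = \<rho> + \<delta>"
    and far_c: "\<And>a b. a \<in> S \<Longrightarrow> b \<in> S - {a} \<Longrightarrow> \<rho> + 3*\<delta> \<le> dist b (c a)"
    using separated_companions[OF assms(1,3)] unfolding \<delta>_def by (auto simp: algebra_simps)
  define E where "E a = ball a \<rho> \<union> ball (c a) \<delta>" for a
  have disj: "disjoint_family_on E S"
    unfolding disjoint_family_on_def E_def
  proof (intro ballI impI disjoint_ball_pairs)
    fix a b assume ab: "a \<in> S" "b \<in> S" "a \<noteq> b"
    show "2*\<rho> \<le> dist a b"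
      using assms(3) ab unfolding separated_def by blast
    show "\<rho> + 3*\<delta> \<le> dist a (c b)" "\<rho> + 3*\<delta> \<le> dist b (c a)"
      using far_c ab by auto
    show "dist b (c b) \<le> \<rho> + \<delta>"
      using dist_c ab(2) by simp
  qed
  have sub: "E a \<subseteq> ball 0 (R + \<rho> + 2*\<delta>)" if "a \<in> S" for a
  proof
    fix z assume "z \<in> E a"
    then have "dist a z < \<rho> \<or> dist (c a) z < \<delta>"
      by (simp add: E_def)
    moreover have "dist 0 z \<le> dist 0 a + dist a z" "dist a z \<le> dist a (c a) + dist (c a) z"
      by (rule dist_triangle)+
    moreover have "dist 0 a \<le> R"
      using assms(4) that by auto
    ultimately show "z \<in> ball 0 (R + \<rho> + 2*\<delta>)"
      using dist_c[OF that] assms(1) \<delta>_def by auto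
  qed
  have meas: "measure lborel (E a) = (\<rho>^2 + \<delta>^2) * measure lborel (ball (0::complex) 1)" if "a \<in> S" for a
    unfolding E_def using assms(1) dist_c[OF that] \<delta>_def by (subst measure_ball_Un_ball) simp_all
  have "real (card S) * ((\<rho>^2 + \<delta>^2) * measure lborel (ball (0::complex) 1))
      \<le> measure lborel (ball (0::complex) (R + \<rho> + 2*\<delta>))"
    by (rule card_mult_le_measure_if_disjoint[OF assms(2) disj _ sub])
      (simp_all add: meas fmeasurable_def emeasure_lborel_ball_finite[unfolded infinity_ennreal_def],
       simp add: E_def)
  also have "\<dots> = (R + \<rho> + 2*\<delta>)^2 * measure lborel (ball (0::complex) 1)"
    using R assms(1) \<delta>_def by (subst content_ball_conv_unit_ball) simp_all
  finally show ?thesis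
    using content_ball_pos[of 1 "0::complex"] \<delta>_def by (simp add: mult.assoc)
qed simp

lemma separated_seq_norm_ge:
  fixes x :: "nat \<Rightarrow> complex"
  assumes "\<rho> > 0" "inj x" "separated (2*\<rho>) (range x)" "mono (\<lambda>n. norm (x n))"
  shows "sqrt (\<rho>^2 + (\<rho>/400)^2) * sqrt (real m) - (\<rho> + \<rho>/200) \<le> norm (x m)"
proof -
  have "card (x ` {..m}) = Suc m"
    using assms(2) by (simp add: card_image inj_on_subset)
  moreover have "separated (2*\<rho>) (x ` {..m})"
    using assms(3) unfolding separated_def by blast
  moreover have "x ` {..m} \<subseteq> cball 0 (norm (x m))"
    using assms(4) by (auto dest: monoD)
  ultimately have "real (Suc m) * (\<rho>^2 + (\<rho>/400)^2) \<le> (norm (x m) + \<rho> + \<rho>/200)^2"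
    using separated_card_le[OF assms(1), of "x ` {..m}"] by simp
  then have "sqrt (real (Suc m) * (\<rho>^2 + (\<rho>/400)^2)) \<le> norm (x m) + \<rho> + \<rho>/200"
    using assms(1) by (intro real_le_lsqrt) auto
  moreover have "sqrt (\<rho>^2 + (\<rho>/400)^2) * sqrt (real m) \<le> sqrt (\<rho>^2 + (\<rho>/400)^2) * sqrt (real (Suc m))"
    by (intro mult_left_mono) simp_all
  then have "sqrt (\<rho>^2 + (\<rho>/400)^2) * sqrt (real m) \<le> sqrt (real (Suc m) * (\<rho>^2 + (\<rho>/400)^2))"
    by (simp add: real_sqrt_mult mult.commute)
  ultimately show ?thesis
    by linarith
qed

lemma limsup_div_sqrt_le:
  fixes g :: "nat \<Rightarrow> real"
  assumes "\<And>n. g n \<le> a * sqrt (real n) + b"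
  shows "limsup (\<lambda>n. ereal (g n / sqrt (real n))) \<le> ereal a"
proof -
  have "((\<lambda>n. (a * sqrt (real n) + b) / sqrt (real n)) \<longlongrightarrow> a) sequentially"
    by real_asymp
  then have "limsup (\<lambda>n. ereal ((a * sqrt (real n) + b) / sqrt (real n))) = ereal a"
    by (intro lim_imp_Limsup) simp_all
  moreover have "limsup (\<lambda>n. ereal (g n / sqrt (real n)))
      \<le> limsup (\<lambda>n. ereal ((a * sqrt (real n) + b) / sqrt (real n)))"
    by (intro Limsup_mono always_eventually allI) (simp add: assms divide_right_mono)
  ultimately show ?thesis
    by simp
qed

lemma liminf_div_sqrt_ge:
  fixes g :: "nat \<Rightarrow> real"
  assumes "\<And>n. a * sqrt (real n) - b \<le> g n"
  shows "ereal a \<le> liminf (\<lambda>n. ereal (g n / sqrt (real n)))"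
proof -
  have "((\<lambda>n. (a * sqrt (real n) - b) / sqrt (real n)) \<longlongrightarrow> a) sequentially"
    by real_asymp
  then have "liminf (\<lambda>n. ereal ((a * sqrt (real n) - b) / sqrt (real n))) = ereal a"
    by (intro lim_imp_Liminf) simp_all
  moreover have "liminf (\<lambda>n. ereal ((a * sqrt (real n) - b) / sqrt (real n)))
      \<le> liminf (\<lambda>n. ereal (g n / sqrt (real n)))"
    by (intro Liminf_mono always_eventually allI) (simp add: assms divide_right_mono)
  ultimately show ?thesis
    by simp
qed

definition spiral_seq :: "(real \<Rightarrow> real) \<Rightarrow> real \<Rightarrow> nat \<Rightarrow> complex" where
  "spiral_seq f \<alpha> n = complex_of_real (f (real n)) * exp (2 * of_real pi * \<i> * of_nat n * of_real \<alpha>)"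

lemma spiral_set_eq_range: "spiral_set f \<alpha> = range (spiral_seq f \<alpha>)"
  by (auto simp: spiral_set_def spiral_seq_def)

lemma norm_spiral_seq:
  assumes "0 \<le> f (real n)"
  shows "norm (spiral_seq f \<alpha> n) = f (real n)"
proof -
  have "norm (exp (2 * of_real pi * \<i> * of_nat n * of_real \<alpha>)) = 1"
    unfolding norm_exp_eq_Re by simp
  then show ?thesis
    using assms by (simp add: spiral_seq_def norm_mult)
qed

lemma rel_dense_range_limsup_lt:
  fixes x :: "nat \<Rightarrow> complex"
  assumes "rel_dense r (range x)" "mono (\<lambda>n. norm (x n))"
  shows "limsup (\<lambda>n. ereal (norm (x n) / sqrt (real n))) < ereal (2 * r)"
proof -
  have "r > 0"
    using assms(1) by (simp add: rel_dense_def)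
  have "\<exists>n. dist y (x n) < r" for y
  proof -
    have "ball y r \<inter> range x \<noteq> {}"
      using assms(1) unfolding rel_dense_def by blast
    then show ?thesis
      by auto
  qed
  then have "limsup (\<lambda>n. ereal (norm (x n) / sqrt (real n))) \<le> ereal (3/2 * r)"
    using rel_dense_seq_norm_le[OF \<open>r > 0\<close> _ assms(2)] by (intro limsup_div_sqrt_le) blast
  also have "\<dots> < ereal (2 * r)"
    using \<open>r > 0\<close> by simp
  finally show ?thesis .
qed

lemma unif_discrete_range_liminf_gt:
  fixes x :: "nat \<Rightarrow> complex"
  assumes "unif_discrete s (range x)" "inj x" "mono (\<lambda>n. norm (x n))"
  shows "ereal (s / 2) < liminf (\<lambda>n. ereal (norm (x n) / sqrt (real n)))"
proof -
  define \<rho> where "\<rho> = s/2"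
  have "\<rho> > 0"
    using assms(1) by (simp add: unif_discrete_def \<rho>_def)
  have "separated (2*\<rho>) (range x)"
    using unif_discrete_imp_separated[OF assms(1)] by (simp add: \<rho>_def)
  have "\<rho> < sqrt (\<rho>^2 + (\<rho>/400)^2)"
    using \<open>\<rho> > 0\<close> by (intro real_less_rsqrt) simp
  then have "ereal (s/2) < ereal (sqrt (\<rho>^2 + (\<rho>/400)^2))"
    by (simp add: \<rho>_def)
  also have "\<dots> \<le> liminf (\<lambda>n. ereal (norm (x n) / sqrt (real n)))"
    using separated_seq_norm_ge[OF \<open>\<rho> > 0\<close> assms(2) \<open>separated (2*\<rho>) (range x)\<close> assms(3)]
    by (rule liminf_div_sqrt_ge)
  finally show ?thesis .
qed

theorem lemma1:
  fixes f :: "real \<Rightarrow> real" and \<alpha> r s :: real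
  assumes "\<forall>x\<ge>0. f x \<ge> 0"
    and "strict_mono_on {0..} f"
    and "0 \<le> \<alpha>" and "\<alpha> < 1"
  shows "(rel_dense r (spiral_set f \<alpha>) \<longrightarrow>
            limsup (\<lambda>n::nat. ereal (f (real n) / sqrt (real n))) < ereal (2 * r))
       \<and> (unif_discrete s (spiral_set f \<alpha>) \<longrightarrow>
            liminf (\<lambda>n::nat. ereal (f (real n) / sqrt (real n))) > ereal (s / 2))"
proof -
  let ?x = "spiral_seq f \<alpha>"
  have norm_x: "norm (?x n) = f (real n)" for n
    using assms(1) by (simp add: norm_spiral_seq)
  have f_less: "f (real i) < f (real j)" if "i < j" for i j
    using assms(2) that by (auto intro: strict_mono_onD)
  then have "mono (\<lambda>n. norm (?x n))"
    unfolding norm_x by (intro monoI) (metis le_less)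
  moreover have "inj ?x"
    by (intro injI) (metis f_less norm_x less_irrefl linorder_neqE_nat)
  ultimately show ?thesis
    using rel_dense_range_limsup_lt[of r ?x] unif_discrete_range_liminf_gt[of s ?x]
    by (simp add: spiral_set_eq_range norm_x)
qed

end
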